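(* Let $G$ and $H$ be finitely generated residually finite groups, let $S$ be a finite symmetric generating set of $G\times H$, and let $(X_n)_{n\ge0}$ be the lazy random walk on $\mathrm{Cay}(G\times H,S)$. Write $X_n=(Y_n,Z_n)$ with $Y_n\in G$, $Z_n\in H$. Then for all $k\ge0$ and all $n$, $$\mathbb{P}[D_{G\times H}(X_n)>k]\le\mathbb{P}[D_G(Y_n)>k]+\mathbb{P}[D_H(Z_n)>k].$$
   Context: For a group $\Gamma$ and $g\ne e$, $D_\Gamma(g)=\min\{[\Gamma:N]: N\lhd\Gamma\text{ of finite index},\ g\notin N\}$, and $D_\Gamma(e)=0$. The lazy random walk on $\mathrm{Cay}(\Gamma,S)$ is the Markov chain with $X_0=e$ and transition matrix $\frac12I+\frac12P$, $P(x,y)=\frac1{|S|}\#\{s\in S:y=xs\}$. *)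

theory Defs
  imports "HOL-Algebra.Algebra" "HOL-Probability.Probability"
begin

definition fin_gen_group :: "('a, 'b) monoid_scheme \<Rightarrow> bool" where
  "fin_gen_group G \<longleftrightarrow> group G \<and>
     (\<exists>A. finite A \<and> A \<subseteq> carrier G \<and> generate G A = carrier G)"

definition fin_index_normal :: "('a, 'b) monoid_scheme \<Rightarrow> 'a set \<Rightarrow> bool" where
  "fin_index_normal G N \<longleftrightarrow> N \<lhd> G \<and> finite (rcosets\<^bsub>G\<^esub> N)"

definition residually_finite :: "('a, 'b) monoid_scheme \<Rightarrow> bool" where
  "residually_finite G \<longleftrightarrow> group G \<and>
     (\<forall>g\<in>carrier G. g \<noteq> \<one>\<^bsub>G\<^esub> \<longrightarrow> (\<exists>N. fin_index_normal G N \<and> g \<notin> N))"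

definition depth :: "('a, 'b) monoid_scheme \<Rightarrow> 'a \<Rightarrow> nat" where
  "depth G g = (if g = \<one>\<^bsub>G\<^esub> then 0
     else Inf {card (rcosets\<^bsub>G\<^esub> N) | N. fin_index_normal G N \<and> g \<notin> N})"

definition lazy_step :: "('a, 'b) monoid_scheme \<Rightarrow> 'a set \<Rightarrow> 'a \<Rightarrow> 'a pmf" where
  "lazy_step G S x = bind_pmf (bernoulli_pmf (1/2))
     (\<lambda>b. if b then return_pmf x else map_pmf (\<lambda>s. x \<otimes>\<^bsub>G\<^esub> s) (pmf_of_set S))"

fun lazy_walk :: "('a, 'b) monoid_scheme \<Rightarrow> 'a set \<Rightarrow> nat \<Rightarrow> 'a pmf" where
  "lazy_walk G S 0 = return_pmf \<one>\<^bsub>G\<^esub>"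
| "lazy_walk G S (Suc n) = bind_pmf (lazy_walk G S n) (lazy_step G S)"

end

theory Submission imports Defs begin

text \<open>
  The inequality holds pointwise. If \<open>g \<notin> N\<close> for a finite-index normal subgroup \<open>N\<close> of \<open>G\<close>,
  then \<open>(g, h) \<notin> N \<times> H\<close>, and \<open>N \<times> H\<close> is normal in \<open>G \<times> H\<close> of the same index as \<open>N\<close>;
  symmetrically for \<open>H\<close>. Hence \<open>D\<^sub>G\<^sub>\<times>\<^sub>H(g, h) \<le> max (D\<^sub>G g) (D\<^sub>H h)\<close>, so the event
  \<open>D\<^sub>G\<^sub>\<times>\<^sub>H(X\<^sub>n) > k\<close> is covered by the union of the other two events on the support of the
  walk, and the union bound finishes the proof.
\<close>

lemma (in group) rcosets_carrier_self: "rcosets (carrier G) = {carrier G}"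
  using coset_join2[OF _ subgroup_self] by (auto simp: RCOSETS_def)

lemma (in group) fin_index_normal_carrier: "fin_index_normal G (carrier G)"
  by (simp add: fin_index_normal_def normal_self rcosets_carrier_self)

lemma (in group) bij_betw_rcosets_DirProd:
  assumes "group K" "N \<lhd> G" "M \<lhd> K"
  shows "bij_betw (\<lambda>(A, B). A \<times> B) ((rcosets N) \<times> (rcosets\<^bsub>K\<^esub> M)) (rcosets\<^bsub>G \<times>\<times> K\<^esub> (N \<times> M))"
  using FactGroup_DirProd_multiplication_iso_set[OF assms]
  by (simp add: iso_def FactGroup_def)

lemma fin_index_normal_DirProd:
  assumes "group G" "group K" "fin_index_normal G N" "fin_index_normal K M"
  shows "fin_index_normal (G \<times>\<times> K) (N \<times> M)"
    and "card (rcosets\<^bsub>G \<times>\<times> K\<^esub> (N \<times> M)) = card (rcosets\<^bsub>G\<^esub> N) * card (rcosets\<^bsub>K\<^esub> M)"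
proof -
  have bij: "bij_betw (\<lambda>(A, B). A \<times> B) ((rcosets\<^bsub>G\<^esub> N) \<times> (rcosets\<^bsub>K\<^esub> M)) (rcosets\<^bsub>G \<times>\<times> K\<^esub> (N \<times> M))"
    using assms group.bij_betw_rcosets_DirProd by (auto simp: fin_index_normal_def)
  show "fin_index_normal (G \<times>\<times> K) (N \<times> M)"
    using assms group.DirProd_normal bij_betw_finite[OF bij]
    by (auto simp: fin_index_normal_def)
  show "card (rcosets\<^bsub>G \<times>\<times> K\<^esub> (N \<times> M)) = card (rcosets\<^bsub>G\<^esub> N) * card (rcosets\<^bsub>K\<^esub> M)"
    using bij_betw_same_card[OF bij] by (simp add: card_cartesian_product)
qed

lemma depth_le_card_rcosets:
  assumes "fin_index_normal G N" "g \<notin> N"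
  shows "depth G g \<le> card (rcosets\<^bsub>G\<^esub> N)"
  using assms by (auto simp: depth_def intro!: cInf_lower)

lemma residually_finite_depth_attained:
  assumes "residually_finite G" "g \<in> carrier G" "g \<noteq> \<one>\<^bsub>G\<^esub>"
  obtains N where "fin_index_normal G N" "g \<notin> N" "depth G g = card (rcosets\<^bsub>G\<^esub> N)"
proof -
  let ?I = "{card (rcosets\<^bsub>G\<^esub> N) | N. fin_index_normal G N \<and> g \<notin> N}"
  have "?I \<noteq> {}" using assms by (auto simp: residually_finite_def)
  then have "Inf ?I \<in> ?I" by (rule Inf_nat_def1)
  then obtain N where "fin_index_normal G N" "g \<notin> N" "Inf ?I = card (rcosets\<^bsub>G\<^esub> N)"
    by blast
  moreover have "depth G g = Inf ?I" using assms(3) by (simp add: depth_def)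
  ultimately show ?thesis using that by simp
qed

lemma depth_DirProd_le_max:
  assumes "residually_finite G" "residually_finite H" "g \<in> carrier G" "h \<in> carrier H"
  shows "depth (G \<times>\<times> H) (g, h) \<le> max (depth G g) (depth H h)"
proof -
  have G: "group G" and H: "group H"
    using assms(1,2) by (auto simp: residually_finite_def)
  consider "g = \<one>\<^bsub>G\<^esub>" "h = \<one>\<^bsub>H\<^esub>" | "g \<noteq> \<one>\<^bsub>G\<^esub>" | "h \<noteq> \<one>\<^bsub>H\<^esub>" by blast
  then show ?thesis
  proof cases
    case 1
    then show ?thesis by (simp add: depth_def)
  next
    case 2
    obtain N where N: "fin_index_normal G N" "g \<notin> N" "depth G g = card (rcosets\<^bsub>G\<^esub> N)"
      by (rule residually_finite_depth_attained[OF assms(1,3) 2])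
    note NH = fin_index_normal_DirProd[OF G H N(1) group.fin_index_normal_carrier[OF H]]
    have "depth (G \<times>\<times> H) (g, h) \<le> card (rcosets\<^bsub>G \<times>\<times> H\<^esub> (N \<times> carrier H))"
      using N(2) by (intro depth_le_card_rcosets[OF NH(1)]) simp
    also have "\<dots> = depth G g"
      unfolding NH(2) N(3) group.rcosets_carrier_self[OF H] by simp
    finally show ?thesis by simp
  next
    case 3
    obtain M where M: "fin_index_normal H M" "h \<notin> M" "depth H h = card (rcosets\<^bsub>H\<^esub> M)"
      by (rule residually_finite_depth_attained[OF assms(2,4) 3])
    note GM = fin_index_normal_DirProd[OF G H group.fin_index_normal_carrier[OF G] M(1)]
    have "depth (G \<times>\<times> H) (g, h) \<le> card (rcosets\<^bsub>G \<times>\<times> H\<^esub> (carrier G \<times> M))"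
      using M(2) by (intro depth_le_card_rcosets[OF GM(1)]) simp
    also have "\<dots> = depth H h"
      unfolding GM(2) M(3) group.rcosets_carrier_self[OF G] by simp
    finally show ?thesis by simp
  qed
qed

lemma set_pmf_lazy_walk_subset:
  assumes "monoid M" "finite S" "S \<noteq> {}" "S \<subseteq> carrier M"
  shows "set_pmf (lazy_walk M S n) \<subseteq> carrier M"
proof (induction n)
  case 0
  then show ?case using assms(1) by (simp add: monoid.one_closed)
next
  case (Suc n)
  show ?case
  proof
    fix y assume "y \<in> set_pmf (lazy_walk M S (Suc n))"
    then obtain x where x: "x \<in> set_pmf (lazy_walk M S n)" "y \<in> set_pmf (lazy_step M S x)"
      by auto
    have "x \<in> carrier M" using x(1) Suc by blast
    with x(2) show "y \<in> carrier M"
      using assms by (auto simp: lazy_step_def set_pmf_bernoulli split: if_splits intro: monoid.m_closed)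
  qed
qed

lemma measure_pmf_prob_le_add_of_cover:
  assumes "\<And>x. x \<in> set_pmf p \<Longrightarrow> x \<in> A \<Longrightarrow> x \<in> B \<or> x \<in> C"
  shows "measure_pmf.prob p A \<le> measure_pmf.prob p B + measure_pmf.prob p C"
proof -
  have "measure_pmf.prob p A \<le> measure_pmf.prob p (B \<union> C)"
    using assms by (intro measure_pmf.finite_measure_mono_AE) (auto simp: AE_measure_pmf_iff)
  also have "\<dots> \<le> measure_pmf.prob p B + measure_pmf.prob p C"
    by (rule measure_subadditive) (simp_all add: measure_pmf.emeasure_finite)
  finally show ?thesis .
qed

theorem proposition4p6:
  fixes G :: "('a, 'c) monoid_scheme" and H :: "('b, 'd) monoid_scheme"
    and S :: "('a \<times> 'b) set" and k n :: nat
  assumes "fin_gen_group G" and "residually_finite G"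
    and "fin_gen_group H" and "residually_finite H"
    and "finite S" and "S \<noteq> {}" and "S \<subseteq> carrier (G \<times>\<times> H)"
    and "\<forall>s\<in>S. inv\<^bsub>G \<times>\<times> H\<^esub> s \<in> S"
    and "generate (G \<times>\<times> H) S = carrier (G \<times>\<times> H)"
  shows "measure_pmf.prob (lazy_walk (G \<times>\<times> H) S n) {x. depth (G \<times>\<times> H) x > k}
     \<le> measure_pmf.prob (lazy_walk (G \<times>\<times> H) S n) {x. depth G (fst x) > k}
      + measure_pmf.prob (lazy_walk (G \<times>\<times> H) S n) {x. depth H (snd x) > k}"
proof (rule measure_pmf_prob_le_add_of_cover)
  fix x assume x: "x \<in> set_pmf (lazy_walk (G \<times>\<times> H) S n)" "x \<in> {x. depth (G \<times>\<times> H) x > k}"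
  have "monoid (G \<times>\<times> H)"
    using assms(1,3) by (simp add: fin_gen_group_def DirProd_group group.is_monoid)
  then have "x \<in> carrier G \<times> carrier H"
    using set_pmf_lazy_walk_subset assms(5-7) x(1) by fastforce
  then have "depth (G \<times>\<times> H) x \<le> max (depth G (fst x)) (depth H (snd x))"
    using depth_DirProd_le_max[OF assms(2,4), of "fst x" "snd x"] by auto
  then show "x \<in> {x. depth G (fst x) > k} \<or> x \<in> {x. depth H (snd x) > k}"
    using x(2) by auto
qed

end
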